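(* In the SLAR setting, let $(w^{(t)})_{t\ge0}$ be the sequence produced by adversarial training. Let $x_i$ be a non-robust feature. Then for all $t>0$: if $w_i^{(t)}>0$ then $w_i^{(t+1)}\le 0$, and if $w_i^{(t)}<0$ then $w_i^{(t+1)}\ge0$.
   Context: SLAR setting: $(x,y)$ is drawn from a distribution $\mathcal D$ on $\mathbb R^d\times\{-1,+1\}$, $x=(x_1,\dots,x_d)$ with finite second moments, such that (A1) for each $i$ there is a constant $\mu_i$ with $\mathbb E[x_i\mid y]=y\mu_i$ for $y\in\{-1,1\}$, and (A2) the coordinates $x_1,\dots,x_d$ are mutually independent conditionally on $y$. Fix $\lambda>0$ and a perturbation budget $\varepsilon>0$; $\mathcal B(\varepsilon)=\{a\in\mathbb R^d:\|a\|_\infty\le\varepsilon\}$. A perturbation function is a measurable map $\delta$ assigning to each $(x,y)$ a vector $\delta(x,y)\in\mathcal B(\varepsilon)$. For a perturbation function $\delta$ and $w\in\mathbb R^d$ let $U(\delta,w)=\mathbb E_{(x,y)\sim\mathcal D}[\max(0,1-yw^\top(x+\delta(x,y)))]+\frac{\lambda}{2}\|w\|_2^2$. A feature $x_i$ is non-robust if $|\mu_i|\le\varepsilon$, and robust otherwise. $\operatorname{sign}$ is coordinatewise with $\operatorname{sign}(0)=0$. Adversarial training (AT): from an arbitrary $w^{(0)}\in\mathbb R^d$, for $t\ge1$ set $\delta^{(t)}(x,y)=-y\varepsilon\operatorname{sign}(w^{(t-1)})$ and $w^{(t)}=\arg\min_{w\in\mathbb R^d}U(\delta^{(t)},w)$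 (this minimizer is unique). *)

theory Defs
  imports "HOL-Probability.Probability"
begin

text \<open>The SLAR distribution assumptions: D is a probability distribution on R^d x R
  (Borel sets), the label is almost surely in {-1,1}, coordinates have finite second
  moments, (A1) E[x_i | y] = y mu_i, i.e. E[x_i 1{y=c}] = c mu_i P(y=c) for c = +-1,
  (A2) coordinates are mutually independent conditionally on y (under the conditional
  distribution given y = c, whenever P(y=c) > 0).\<close>
definition slar_dist :: "((real^'n) \<times> real) measure \<Rightarrow> real^'n \<Rightarrow> bool" where
  "slar_dist D \<mu> \<longleftrightarrow>
     prob_space D \<and> sets D = sets borel \<and>
     (AE p in D. snd p = 1 \<or> snd p = -1) \<and>
     (\<forall>i. integrable D (\<lambda>p. (fst p $ i)\<^sup>2)) \<and>
     (\<forall>i. \<forall>c\<in>{-1, 1::real}.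
        (\<integral>p. indicator {p. snd p = c} p * (fst p $ i) \<partial>D)
          = c * (\<mu> $ i) * measure D {p. snd p = c}) \<and>
     (\<forall>c\<in>{-1, 1::real}. measure D {p. snd p = c} > 0 \<longrightarrow>
        prob_space.indep_vars (uniform_measure D {p. snd p = c})
          (\<lambda>_. borel) (\<lambda>i p. fst p $ i) UNIV)"

definition U_obj :: "((real^'n) \<times> real) measure \<Rightarrow> real \<Rightarrow> ((real^'n) \<times> real \<Rightarrow> real^'n)
    \<Rightarrow> real^'n \<Rightarrow> real" where
  "U_obj D lam \<delta> w =
     (\<integral>p. max 0 (1 - snd p * (w \<bullet> (fst p + \<delta> p))) \<partial>D) + lam / 2 * (norm w)\<^sup>2"

definition at_perturb :: "real \<Rightarrow> real^'n \<Rightarrow> ((real^'n) \<times> real \<Rightarrow> real^'n)" where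
  "at_perturb \<epsilon> w = (\<lambda>p. (- (snd p * \<epsilon>)) *\<^sub>R (\<chi> j. sgn (w $ j)))"

text \<open>AT sequence: w (t+1) minimizes U(at_perturb eps (w t), .) for every t >= 0
  (the minimizer is unique, so this determines the sequence from w 0).\<close>
definition AT_seq :: "((real^'n) \<times> real) measure \<Rightarrow> real \<Rightarrow> real \<Rightarrow> (nat \<Rightarrow> real^'n) \<Rightarrow> bool" where
  "AT_seq D lam \<epsilon> w \<longleftrightarrow>
     (\<forall>t. \<forall>v. U_obj D lam (at_perturb \<epsilon> (w t)) (w (Suc t))
                \<le> U_obj D lam (at_perturb \<epsilon> (w t)) v)"

end

theory Submission
  imports Defs
begin

text \<open>Let s be the sign vector of w(t), so that the perturbation is -y \<epsilon> s, let W = w(t+1) and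
  suppose s_i W_i > 0. Zeroing the i-th coordinate of W gives V, whose hinge argument A does not
  involve x_i; since y^2 = 1, the hinge argument of W is A + W_i (\<epsilon> s_i - y x_i). By convexity of
  max 0, the hinge loss of W is at least that of V plus [A > 0] W_i (\<epsilon> s_i - y x_i). As A depends
  only on y and the other coordinates, conditional independence and (A1) turn the expectation of
  this correction into W_i (\<epsilon> s_i - \<mu>_i) P(A > 0), which is nonnegative because \<bar>\<mu>_i\<bar> \<le> \<epsilon>. So V has
  no larger expected loss and a regulariser smaller by \<lambda> W_i^2 / 2, contradicting the minimality
  of W.\<close>

lemma borel_measurable_fst_nth [measurable]:
  "(\<lambda>p::(real^'n) \<times> real. fst p $ j) \<in> borel_measurable borel"
  by (intro borel_measurable_continuous_onI continuous_intros)

lemma borel_measurable_snd_real [measurable]: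
  "(\<lambda>p::(real^'n) \<times> real. snd p) \<in> borel_measurable borel"
  by (intro borel_measurable_continuous_onI continuous_intros)

lemma borel_measurable_inner_fst [measurable]:
  "(\<lambda>p::(real^'n) \<times> real. v \<bullet> fst p) \<in> borel_measurable borel"
  by (intro borel_measurable_continuous_onI continuous_intros)

lemma (in finite_measure) uniform_measure_eq_density:
  assumes "A \<in> sets M" "measure M A > 0"
  shows "uniform_measure M A = density M (\<lambda>x. ennreal (indicator A x / measure M A))"
proof -
  have "indicator A x / emeasure M A = ennreal (indicator A x / measure M A)" for x
    using assms(2) by (cases "x \<in> A") (simp_all add: emeasure_eq_measure divide_ennreal[symmetric])
  then show ?thesis
    unfolding uniform_measure_def by presburger
qed

lemma (in finite_measure) integral_uniform_measure:
  assumes "A \<in> sets M" "measure M A > 0" and "f \<in> borel_measurable M"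
  shows "(\<integral>x. f x \<partial>uniform_measure M A) = (\<integral>x. indicator A x * f x \<partial>M) / measure M A"
proof -
  have "(\<integral>x. f x \<partial>uniform_measure M A) = (\<integral>x. (indicator A x / measure M A) *\<^sub>R f x \<partial>M)"
    unfolding uniform_measure_eq_density[OF assms(1,2)] using assms by (intro integral_density) auto
  then show ?thesis
    by simp
qed

lemma (in finite_measure) integrable_uniform_measure:
  assumes "A \<in> sets M" "measure M A > 0" and "integrable M (f :: _ \<Rightarrow> real)"
  shows "integrable (uniform_measure M A) f"
proof -
  have "integrable M (\<lambda>x. (indicator A x * f x) / measure M A)"
    using integrable_real_mult_indicator[OF assms(1,3)] by (simp add: mult.commute)
  then have "integrable M (\<lambda>x. (indicator A x / measure M A) *\<^sub>R f x)"
    by simp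
  then show ?thesis
    unfolding uniform_measure_eq_density[OF assms(1,2)] using assms
    by (subst integrable_density) auto
qed

lemma inner_cancel_nth:
  "(W - W $ i *\<^sub>R axis i 1) \<bullet> z = W \<bullet> z - W $ i * z $ i"
  by (simp add: inner_diff_left inner_axis')

lemma norm_cancel_nth:
  fixes W :: "real^'n"
  shows "(norm W)\<^sup>2 = (norm (W - W $ i *\<^sub>R axis i 1))\<^sup>2 + (W $ i)\<^sup>2"
proof -
  define V where "V = W - W $ i *\<^sub>R axis i 1"
  have "V \<bullet> axis i 1 = 0"
    by (simp add: V_def inner_axis)
  then have "(norm (V + W $ i *\<^sub>R axis i 1))\<^sup>2 = (norm V)\<^sup>2 + (W $ i)\<^sup>2"
    unfolding power2_norm_eq_inner
    by (simp add: inner_add_left inner_add_right inner_commute inner_axis' power2_eq_square)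
  then show ?thesis
    by (simp add: V_def)
qed

locale slar =
  fixes D :: "((real^'n) \<times> real) measure" and \<mu> :: "real^'n"
  assumes slar_dist: "slar_dist D \<mu>"
begin

sublocale prob_space D
  using slar_dist by (simp add: slar_dist_def)

lemma sets_D [measurable_cong]: "sets D = sets borel"
  using slar_dist by (simp add: slar_dist_def)

lemma borel_measurable_D: "borel_measurable D = borel_measurable borel"
  by (rule measurable_cong_sets) (simp_all add: sets_D)

lemma AE_label: "AE p in D. snd p = 1 \<or> snd p = -1"
  using slar_dist by (simp add: slar_dist_def)

lemma integrable_coord: "integrable D (\<lambda>p. fst p $ j)"
proof -
  have "integrable D (\<lambda>p. (fst p $ j)\<^sup>2)"
    using slar_dist by (simp add: slar_dist_def)
  then show ?thesis
    using square_integrable_imp_integrable[of "\<lambda>p. fst p $ j"] by (simp add: borel_measurable_D)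
qed

lemma integrable_inner_coord: "integrable D (\<lambda>p. v \<bullet> fst p)"
  unfolding inner_vec_def inner_real_def
  by (intro Bochner_Integration.integrable_sum integrable_mult_right integrable_coord)

lemma class_in_sets: "{p. snd p = c} \<in> sets D"
  unfolding sets_D by measurable

lemma integral_uniform_class_coord:
  assumes "c = -1 \<or> c = 1" and "measure D {p. snd p = c} > 0"
  shows "(\<integral>p. fst p $ i \<partial>uniform_measure D {p. snd p = c}) = c * \<mu> $ i"
proof -
  have "(\<integral>p. indicator {p. snd p = c} p * fst p $ i \<partial>D) = c * \<mu> $ i * measure D {p. snd p = c}"
    using slar_dist assms(1) unfolding slar_dist_def by auto
  then show ?thesis
    using assms(2) by (simp add: integral_uniform_measure[OF class_in_sets] borel_measurable_D)
qed

lemma prob_space_class: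
  assumes "measure D {p. snd p = c} > 0"
  shows "prob_space (uniform_measure D {p. snd p = c})"
  using assms class_in_sets by (intro prob_space_uniform_measure) (auto simp: emeasure_eq_measure)

text \<open>This is where (A2) enters: V ignores coordinate i.\<close>

lemma indep_coord_inner_class:
  assumes "V $ i = 0" and c: "c = -1 \<or> c = 1" and pos: "measure D {p. snd p = c} > 0"
  shows "prob_space.indep_var (uniform_measure D {p. snd p = c}) borel (\<lambda>p. fst p $ i)
      borel (\<lambda>p. V \<bullet> fst p)"
proof -
  define M where "M = uniform_measure D {p. snd p = c}"
  have M: "prob_space M"
    unfolding M_def by (rule prob_space_class[OF pos])
  define X where "X = (\<lambda>j p::(real^'n) \<times> real. (if j = i then 1 else V $ j) * fst p $ j)"
  have "prob_space.indep_vars M (\<lambda>_. borel) (\<lambda>j p. fst p $ j) UNIV"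
    using slar_dist pos c unfolding slar_dist_def M_def by auto
  then have "prob_space.indep_vars M (\<lambda>_. borel) X (insert i (UNIV - {i}))"
    using prob_space.indep_vars_compose2[OF M, of _ _ _ "\<lambda>j x. (if j = i then 1 else V $ j) * x"]
    by (simp add: X_def insert_absorb)
  then have "prob_space.indep_var M borel (X i) borel (\<lambda>p. \<Sum>j\<in>UNIV - {i}. X j p)"
    by (intro prob_space.indep_vars_sum[OF M]) auto
  moreover have "(\<lambda>p. \<Sum>j\<in>UNIV - {i}. X j p) = (\<lambda>p. V \<bullet> fst p)"
    using \<open>V $ i = 0\<close>
    by (auto simp: X_def inner_vec_def inner_real_def sum.remove[of UNIV i] intro!: sum.cong)
  ultimately show ?thesis
    by (simp add: X_def M_def)
qed

context
  fixes G :: "real \<Rightarrow> real" and K :: real and V :: "real^'n" and c :: real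
  assumes G_measurable: "G \<in> borel_measurable borel" and G_bounded: "\<And>r. \<bar>G r\<bar> \<le> K"
begin

lemma integrable_bounded_inner: "integrable D (\<lambda>p. G (V \<bullet> fst p))"
proof (rule Bochner_Integration.integrable_bound[of _ "\<lambda>_. K"])
  show "(\<lambda>p. G (V \<bullet> fst p)) \<in> borel_measurable D"
    using G_measurable by (simp add: borel_measurable_D)
  show "AE p in D. norm (G (V \<bullet> fst p)) \<le> norm K"
    using G_bounded by (intro AE_I2) (auto intro: order_trans[OF _ abs_ge_self])
qed simp

lemma integrable_class_bounded:
  "integrable D (\<lambda>p. indicator {p. snd p = c} p * G (V \<bullet> fst p))"
  using integrable_real_mult_indicator[OF _ integrable_bounded_inner, of "{p. snd p = c}"]
  by (simp add: sets_D mult.commute)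

lemma integrable_class_coord:
  "integrable D (\<lambda>p. indicator {p. snd p = c} p * (fst p $ i * G (V \<bullet> fst p)))"
proof (rule Bochner_Integration.integrable_bound)
  show "integrable D (\<lambda>p. K * \<bar>fst p $ i\<bar>)"
    by (intro integrable_mult_right integrable_abs integrable_coord)
  show "(\<lambda>p. indicator {p. snd p = c} p * (fst p $ i * G (V \<bullet> fst p))) \<in> borel_measurable D"
    using G_measurable by (simp add: borel_measurable_D)
  have "\<bar>fst p $ i * G (V \<bullet> fst p)\<bar> \<le> K * \<bar>fst p $ i\<bar>" for p
    using mult_right_mono[OF G_bounded abs_ge_zero] by (simp add: abs_mult mult.commute)
  then show "AE p in D. norm (indicator {p. snd p = c} p * (fst p $ i * G (V \<bullet> fst p)))
      \<le> norm (K * \<bar>fst p $ i\<bar>)"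
    by (intro AE_I2) (auto simp: indicator_def intro: order_trans[OF _ abs_ge_self])
qed

lemma integral_class_coord_factor:
  assumes "V $ i = 0" and c: "c = -1 \<or> c = 1"
  shows "(\<integral>p. indicator {p. snd p = c} p * (fst p $ i * G (V \<bullet> fst p)) \<partial>D)
       = c * \<mu> $ i * (\<integral>p. indicator {p. snd p = c} p * G (V \<bullet> fst p) \<partial>D)"
proof -
  define S where "S = {p::(real^'n) \<times> real. snd p = c}"
  define \<Phi> where "\<Phi> = (\<lambda>p::(real^'n) \<times> real. G (V \<bullet> fst p))"
  have S_sets: "S \<in> sets D"
    unfolding S_def by (rule class_in_sets)
  have \<Phi>_measurable: "\<Phi> \<in> borel_measurable D"
    unfolding \<Phi>_def using G_measurable by (simp add: borel_measurable_D)
  have coord_measurable: "(\<lambda>p. fst p $ i) \<in> borel_measurable D"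
    by (simp add: borel_measurable_D)
  show ?thesis
  proof (cases "measure D S = 0")
    case True
    then have "AE p in D. p \<notin> S"
      using S_sets by (intro AE_not_in null_setsI) (simp_all add: emeasure_eq_measure)
    then have "(\<integral>p. indicator S p * (fst p $ i * \<Phi> p) \<partial>D) = 0"
          and "(\<integral>p. indicator S p * \<Phi> p \<partial>D) = 0"
      by (auto intro!: integral_eq_zero_AE)
    then show ?thesis
      unfolding S_def \<Phi>_def by simp
  next
    case False
    then have S_pos: "measure D S > 0"
      by (simp add: zero_less_measure_iff)
    define M where "M = uniform_measure D S"
    have M: "prob_space M"
      unfolding M_def S_def by (rule prob_space_class[OF S_pos[unfolded S_def]])
    have "prob_space.indep_var M borel (\<lambda>p. fst p $ i) borel (\<lambda>p. V \<bullet> fst p)"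
      unfolding M_def S_def by (rule indep_coord_inner_class[OF \<open>V $ i = 0\<close> c S_pos[unfolded S_def]])
    then have indep: "prob_space.indep_var M borel (\<lambda>p. fst p $ i) borel \<Phi>"
      using prob_space.indep_var_compose[OF M, of borel _ borel _ "\<lambda>x. x" borel G borel] G_measurable
      unfolding \<Phi>_def comp_def by simp
    have "(\<integral>p. fst p $ i * \<Phi> p \<partial>M) = (\<integral>p. fst p $ i \<partial>M) * (\<integral>p. \<Phi> p \<partial>M)"
    proof (rule prob_space.indep_var_lebesgue_integral[OF M indep])
      show "integrable M (\<lambda>p. fst p $ i)"
        unfolding M_def by (rule integrable_uniform_measure[OF S_sets S_pos integrable_coord])
      show "integrable M \<Phi>"
        unfolding M_def \<Phi>_def by (rule integrable_uniform_measure[OF S_sets S_pos integrable_bounded_inner])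
    qed
    moreover have "(\<integral>p. fst p $ i \<partial>M) = c * \<mu> $ i"
      unfolding M_def S_def by (rule integral_uniform_class_coord[OF c S_pos[unfolded S_def]])
    moreover have "(\<integral>p. fst p $ i * \<Phi> p \<partial>M)
        = (\<integral>p. indicator S p * (fst p $ i * \<Phi> p) \<partial>D) / measure D S"
      unfolding M_def using coord_measurable \<Phi>_measurable
      by (intro integral_uniform_measure[OF S_sets S_pos]) simp
    moreover have "(\<integral>p. \<Phi> p \<partial>M) = (\<integral>p. indicator S p * \<Phi> p \<partial>D) / measure D S"
      unfolding M_def by (rule integral_uniform_measure[OF S_sets S_pos \<Phi>_measurable])
    ultimately show ?thesis
      using S_pos unfolding S_def \<Phi>_def by (simp add: field_simps)
  qed
qed

end

context
  fixes g :: "real \<Rightarrow> real \<Rightarrow> real" and K :: real and V :: "real^'n"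
  assumes g_measurable: "case_prod g \<in> borel_measurable borel" and g_bounded: "\<And>c r. \<bar>g c r\<bar> \<le> K"
begin

lemma borel_measurable_section [measurable]: "g c \<in> borel_measurable borel"
proof -
  have "(\<lambda>r. (c, r)) \<in> borel_measurable borel"
    by (intro borel_measurable_continuous_onI continuous_intros)
  from measurable_comp[OF this g_measurable] show ?thesis
    by (simp add: comp_def)
qed

lemma borel_measurable_label_inner [measurable]:
  "(\<lambda>p::(real^'n) \<times> real. g (snd p) (V \<bullet> fst p)) \<in> borel_measurable borel"
proof -
  have "(\<lambda>p::(real^'n) \<times> real. (snd p, V \<bullet> fst p)) \<in> borel_measurable borel"
    by (intro borel_measurable_continuous_onI continuous_intros)
  from measurable_comp[OF this g_measurable] show ?thesis
    by (simp add: comp_def)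
qed

lemma AE_label_split:
  "AE p in D. g (snd p) (V \<bullet> fst p)
     = indicator {p. snd p = -1} p * g (-1) (V \<bullet> fst p) + indicator {p. snd p = 1} p * g 1 (V \<bullet> fst p)"
  "AE p in D. snd p * fst p $ i * g (snd p) (V \<bullet> fst p)
     = - (indicator {p. snd p = -1} p * (fst p $ i * g (-1) (V \<bullet> fst p)))
       + indicator {p. snd p = 1} p * (fst p $ i * g 1 (V \<bullet> fst p))"
  using AE_label by (auto simp: indicator_def)

lemma integrable_label_bounded: "integrable D (\<lambda>p. g (snd p) (V \<bullet> fst p))"
  by (rule integrable_cong_AE_imp[OF _ _ AE_symmetric[OF AE_label_split(1)]])
    (auto intro!: integrable_class_bounded borel_measurable_section g_bounded simp: borel_measurable_D)

lemma integrable_label_coord: "integrable D (\<lambda>p. snd p * fst p $ i * g (snd p) (V \<bullet> fst p))"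
  by (rule integrable_cong_AE_imp[OF _ _ AE_symmetric[OF AE_label_split(2)]])
    (auto intro!: integrable_class_coord borel_measurable_section g_bounded simp: borel_measurable_D)

lemma integral_label_coord_factor:
  assumes "V $ i = 0"
  shows "(\<integral>p. snd p * fst p $ i * g (snd p) (V \<bullet> fst p) \<partial>D)
       = \<mu> $ i * (\<integral>p. g (snd p) (V \<bullet> fst p) \<partial>D)"
proof -
  have "(\<integral>p. snd p * fst p $ i * g (snd p) (V \<bullet> fst p) \<partial>D)
      = (\<integral>p. - (indicator {p. snd p = -1} p * (fst p $ i * g (-1) (V \<bullet> fst p)))
          + indicator {p. snd p = 1} p * (fst p $ i * g 1 (V \<bullet> fst p)) \<partial>D)"
    using AE_label_split(2) by (intro integral_cong_AE) (simp_all add: borel_measurable_D)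
  also have "\<dots> = \<mu> $ i * ((\<integral>p. indicator {p. snd p = -1} p * g (-1) (V \<bullet> fst p) \<partial>D)
        + (\<integral>p. indicator {p. snd p = 1} p * g 1 (V \<bullet> fst p) \<partial>D))"
    using integrable_class_coord[OF borel_measurable_section g_bounded]
      integral_class_coord_factor[OF borel_measurable_section g_bounded assms]
    by (simp add: Bochner_Integration.integral_add algebra_simps)
  also have "\<dots> = \<mu> $ i * (\<integral>p. indicator {p. snd p = -1} p * g (-1) (V \<bullet> fst p)
        + indicator {p. snd p = 1} p * g 1 (V \<bullet> fst p) \<partial>D)"
    using integrable_class_bounded[OF borel_measurable_section g_bounded]
    by (simp add: Bochner_Integration.integral_add)
  also have "\<dots> = \<mu> $ i * (\<integral>p. g (snd p) (V \<bullet> fst p) \<partial>D)"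
    using AE_symmetric[OF AE_label_split(1)]
    by (subst integral_cong_AE[where g = "\<lambda>p. g (snd p) (V \<bullet> fst p)"]) (simp_all add: borel_measurable_D)
  finally show ?thesis .
qed

end

lemma integrable_hinge_at_perturb:
  "integrable D (\<lambda>p. max 0 (1 - snd p * (v \<bullet> (fst p + at_perturb \<epsilon> w p))))"
proof (rule Bochner_Integration.integrable_bound)
  define s where "s = (\<chi> j. sgn (w $ j))"
  show "integrable D (\<lambda>p. 1 + \<bar>v \<bullet> fst p\<bar> + \<bar>\<epsilon> * (v \<bullet> s)\<bar>)"
    by (intro Bochner_Integration.integrable_add integrable_abs integrable_inner_coord) simp_all
  show "(\<lambda>p. max 0 (1 - snd p * (v \<bullet> (fst p + at_perturb \<epsilon> w p)))) \<in> borel_measurable D"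
    unfolding at_perturb_def inner_add_right inner_scaleR_right by (simp add: borel_measurable_D)
  show "AE p in D. norm (max 0 (1 - snd p * (v \<bullet> (fst p + at_perturb \<epsilon> w p))))
      \<le> norm (1 + \<bar>v \<bullet> fst p\<bar> + \<bar>\<epsilon> * (v \<bullet> s)\<bar>)"
    using AE_label
    by eventually_elim (auto simp: at_perturb_def s_def inner_add_right inner_diff_right split: abs_split)
qed

lemma integral_active_correction:
  fixes V s :: "real^'n" and a \<epsilon> :: real and i :: 'n
  defines "c \<equiv> \<lambda>p. if 0 < 1 - snd p * (V \<bullet> (fst p + (- (snd p * \<epsilon>)) *\<^sub>R s))
                   then a * (\<epsilon> * s $ i - snd p * fst p $ i) else 0"
  assumes "V $ i = 0" and "a * (\<epsilon> * s $ i - \<mu> $ i) \<ge> 0"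
  shows "integrable D c" and "(\<integral>p. c p \<partial>D) \<ge> 0"
proof -
  define g where "g = (\<lambda>y r. if 0 < 1 - y * (r - y * \<epsilon> * (V \<bullet> s)) then 1 else 0 :: real)"
  have "(\<lambda>p::real \<times> real. 1 - fst p * (snd p - fst p * \<epsilon> * (V \<bullet> s))) \<in> borel_measurable borel"
    by (intro borel_measurable_continuous_onI continuous_intros)
  then have g_measurable: "case_prod g \<in> borel_measurable borel"
    unfolding g_def case_prod_beta by measurable
  have g_bounded: "\<bar>g y r\<bar> \<le> 1" for y r
    by (simp add: g_def)
  have c_eq: "c = (\<lambda>p. a * \<epsilon> * s $ i * g (snd p) (V \<bullet> fst p)
      - a * (snd p * fst p $ i * g (snd p) (V \<bullet> fst p)))"
    unfolding c_def g_def by (rule ext) (simp add: inner_add_right algebra_simps)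
  note integrable = integrable_label_bounded[OF g_measurable g_bounded]
    integrable_label_coord[OF g_measurable g_bounded]
  show "integrable D c"
    unfolding c_eq using integrable by (intro Bochner_Integration.integrable_diff integrable_mult_right)
  have "(\<integral>p. c p \<partial>D) = a * \<epsilon> * s $ i * (\<integral>p. g (snd p) (V \<bullet> fst p) \<partial>D)
      - a * (\<integral>p. snd p * fst p $ i * g (snd p) (V \<bullet> fst p) \<partial>D)"
    unfolding c_eq using integrable by (simp add: Bochner_Integration.integral_diff)
  also have "\<dots> = a * (\<epsilon> * s $ i - \<mu> $ i) * (\<integral>p. g (snd p) (V \<bullet> fst p) \<partial>D)"
    unfolding integral_label_coord_factor[OF g_measurable g_bounded \<open>V $ i = 0\<close>] by (simp add: algebra_simps)
  finally have "(\<integral>p. c p \<partial>D) = a * (\<epsilon> * s $ i - \<mu> $ i) * (\<integral>p. g (snd p) (V \<bullet> fst p) \<partial>D)" .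
  moreover have "(\<integral>p. g (snd p) (V \<bullet> fst p) \<partial>D) \<ge> 0"
    by (rule Bochner_Integration.integral_nonneg) (simp add: g_def)
  ultimately show "(\<integral>p. c p \<partial>D) \<ge> 0"
    using assms(3) by simp
qed

lemma U_obj_cancel_nth_less:
  assumes "lam > 0" and "\<bar>\<mu> $ i\<bar> \<le> \<epsilon>" and "sgn (w $ i) * W $ i > 0"
  shows "U_obj D lam (at_perturb \<epsilon> w) (W - W $ i *\<^sub>R axis i 1) < U_obj D lam (at_perturb \<epsilon> w) W"
proof -
  define V where "V = W - W $ i *\<^sub>R axis i 1"
  define s where "s = (\<chi> j. sgn (w $ j))"
  define A where "A p = 1 - snd p * (V \<bullet> (fst p + (- (snd p * \<epsilon>)) *\<^sub>R s))" for p
  define c where "c p = (if 0 < A p then W $ i * (\<epsilon> * s $ i - snd p * fst p $ i) else 0)" for p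
  define h where "h v p = max 0 (1 - snd p * (v \<bullet> (fst p + at_perturb \<epsilon> w p)))" for v p
  have V_nth: "V $ i = 0"
    by (simp add: V_def)
  have inner_W: "W \<bullet> z = V \<bullet> z + W $ i * z $ i" for z
    unfolding V_def inner_cancel_nth by simp
  have perturb: "at_perturb \<epsilon> w p = (- (snd p * \<epsilon>)) *\<^sub>R s" for p
    by (simp add: at_perturb_def s_def)
  have "W $ i * (\<epsilon> * s $ i - \<mu> $ i) \<ge> 0"
    using assms(2,3) by (cases "w $ i" "0::real" rule: linorder_cases)
      (auto simp: s_def abs_le_iff intro: mult_nonneg_nonneg mult_nonpos_nonpos)
  from integral_active_correction[OF V_nth this]
  have c_integrable: "integrable D c" and c_nonneg: "(\<integral>p. c p \<partial>D) \<ge> 0"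
    unfolding c_def A_def by auto
  have "AE p in D. max 0 (A p) + c p \<le> h W p"
    using AE_label
  proof eventually_elim
    case (elim p)
    then have "1 - snd p * (W \<bullet> (fst p + at_perturb \<epsilon> w p))
        = A p + W $ i * (\<epsilon> * s $ i - snd p * fst p $ i)"
      unfolding perturb A_def inner_W by (auto simp: inner_add_right algebra_simps)
    then show ?case
      by (simp add: h_def c_def)
  qed
  then have "(\<integral>p. max 0 (A p) + c p \<partial>D) \<le> (\<integral>p. h W p \<partial>D)"
    using c_integrable integrable_hinge_at_perturb[of V \<epsilon> w] integrable_hinge_at_perturb[of W \<epsilon> w]
    by (intro integral_mono_AE) (simp_all add: A_def h_def perturb)
  then have "(\<integral>p. h V p \<partial>D) \<le> (\<integral>p. h W p \<partial>D)"
    using c_integrable c_nonneg integrable_hinge_at_perturb[of V \<epsilon> w]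
    by (simp add: A_def h_def perturb Bochner_Integration.integral_add)
  moreover have "lam / 2 * (norm W)\<^sup>2 = lam / 2 * (norm V)\<^sup>2 + lam / 2 * (W $ i)\<^sup>2"
    unfolding V_def norm_cancel_nth[of W i] by (simp add: distrib_left)
  moreover have "lam / 2 * (W $ i)\<^sup>2 > 0"
    using assms(1,3) by (cases "W $ i = 0") simp_all
  ultimately show ?thesis
    unfolding U_obj_def V_def[symmetric] h_def by linarith
qed

end

theorem mainTheorem8:
  fixes D :: "((real^'n) \<times> real) measure" and \<mu> :: "real^'n"
    and lam \<epsilon> :: real and w :: "nat \<Rightarrow> real^'n" and i :: 'n and t :: nat
  assumes "slar_dist D \<mu>" and "lam > 0" and "\<epsilon> > 0"
    and "AT_seq D lam \<epsilon> w"
    and "\<bar>\<mu> $ i\<bar> \<le> \<epsilon>"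
    and "t > 0"
  shows "(w t $ i > 0 \<longrightarrow> w (Suc t) $ i \<le> 0) \<and> (w t $ i < 0 \<longrightarrow> w (Suc t) $ i \<ge> 0)"
proof -
  interpret slar D \<mu>
    using assms(1) by unfold_locales
  define W where "W = w (Suc t)"
  have "\<not> sgn (w t $ i) * W $ i > 0"
  proof
    assume "sgn (w t $ i) * W $ i > 0"
    then have "U_obj D lam (at_perturb \<epsilon> (w t)) (W - W $ i *\<^sub>R axis i 1)
        < U_obj D lam (at_perturb \<epsilon> (w t)) W"
      using U_obj_cancel_nth_less assms(2,5) by blast
    with assms(4) show False
      unfolding AT_seq_def W_def by (meson not_less)
  qed
  then show ?thesis
    unfolding W_def by (auto simp: sgn_if not_less)
qed

end
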